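(* Let $n>1$ be an integer and $\varphi(z)=z|z|^{n-2}$. For a constant $B>0$ consider the problem \[ \left(\varphi(u'(r))\right)'+\frac{n-1}{r}\varphi(u'(r))+Be^{u}=0 \quad (0<r<1),\qquad u'(0)=u(1)=0 . \] There is a constant $B(n)>0$ such that this problem has exactly two solutions for $0<B<B(n)$, exactly one solution for $B=B(n)$, and no solutions for $B>B(n)$.
   Context: With $\varphi(z)=z|z|^{p-2}$ and $p=n$, the operator $\left(\varphi(u')\right)'+\frac{n-1}{r}\varphi(u')$ is the radial $n$-Laplacian in $\mathbb{R}^n$; the problem is the radial Dirichlet problem on the unit ball. *)

theory Defs
  imports "HOL-Analysis.Analysis"
begin

definition phi :: "nat \<Rightarrow> real \<Rightarrow> real" where
  "phi n z = z * \<bar>z\<bar> ^ (n - 2)"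

definition is_solution :: "nat \<Rightarrow> real \<Rightarrow> (real \<Rightarrow> real) \<Rightarrow> bool" where
  "is_solution n B u \<longleftrightarrow>
     (\<exists>u'. (\<forall>r\<in>{0..1}. (u has_real_derivative u' r) (at r within {0..1}))
        \<and> continuous_on {0..1} u'
        \<and> (\<forall>r\<in>{0<..<1}. ((\<lambda>s. phi n (u' s)) has_real_derivative
               (- ((real n - 1) / r) * phi n (u' r) - B * exp (u r))) (at r))
        \<and> u' 0 = 0 \<and> u 1 = 0)"

text \<open>Solutions are functions on [0,1]; we normalise them to 0 outside [0,1]
  so that distinct elements of this set are distinct solutions on [0,1].\<close>
definition solution_set :: "nat \<Rightarrow> real \<Rightarrow> (real \<Rightarrow> real) set" where
  "solution_set n B = {u. is_solution n B u \<and> (\<forall>r. r \<notin> {0..1} \<longrightarrow> u r = 0)}"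

end

theory Submission
  imports Defs
begin

text \<open>
  For \<open>q > 0\<close> the functions \<open>u_q(r) = n ln (1 + q) - n ln (1 + q r^\<alpha>)\<close>, \<open>\<alpha> = n / (n - 1)\<close>,
  solve the problem with \<open>B = n \<kappa>^(n-1) q^(n-1) / (1 + q)^n\<close>, \<open>\<kappa> = n \<alpha>\<close>, and they are the
  only solutions. Indeed, the flux \<open>r^(n-1) \<phi>(u')\<close> starts at 0 and decreases, so \<open>u' < 0\<close>; the
  scaled slope \<open>s = -r u'\<close> then satisfies the Pohozaev-type identity
  \<open>B r^n e^u = s^(n-1) (n - (n - 1) s / n)\<close>, which reduces the equation to the Bernoulli equation
  \<open>r s' = s (\<kappa> - s) / n\<close>. Its solutions are \<open>s = \<kappa> q r^\<alpha> / (1 + q r^\<alpha>)\<close>, and integrating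
  \<open>u' = -s / r\<close> with \<open>u(1) = 0\<close> gives \<open>u_q\<close>. So the solutions for a given \<open>B\<close> correspond to
  the positive roots of \<open>q^(n-1) / (1 + q)^n = B / (n \<kappa>^(n-1))\<close>; the left side increases on
  \<open>[0, n - 1]\<close> and decreases to 0 afterwards, whence two, one or no solutions.
\<close>

lemma has_real_derivative_within_Icc_of_interior:
  fixes f f' :: "real \<Rightarrow> real"
  assumes "a < b" "continuous_on {a..b} f" "continuous_on {a..b} f'"
    and "\<And>x. x \<in> {a<..<b} \<Longrightarrow> (f has_real_derivative f' x) (at x)"
    and x: "x \<in> {a..b}"
  shows "(f has_real_derivative f' x) (at x within {a..b})"
proof -
  have ftc: "f y = f a + integral {a..y} f'" if y: "y \<in> {a..b}" for y
  proof -
    have "(f' has_integral (f y - f a)) {a..y}"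
      using y assms by (intro fundamental_theorem_of_calculus_interior)
        (auto intro: continuous_on_subset simp: has_real_derivative_iff_has_vector_derivative[symmetric])
    then show ?thesis by (simp add: integral_unique)
  qed
  have "((\<lambda>y. f a + integral {a..y} f') has_real_derivative f' x) (at x within {a..b})"
    using integral_has_real_derivative[OF assms(3) x] by (auto intro: derivative_eq_intros)
  then show ?thesis
    by (rule has_field_derivative_transform_within[where d=1]) (use x in \<open>auto simp: ftc[symmetric]\<close>)
qed

lemma power_eq_mult_power_pred: "0 < k \<Longrightarrow> (x::real) ^ k = x * x ^ (k - 1)"
  by (cases k) simp_all

definition profile :: "nat \<Rightarrow> real \<Rightarrow> real" where
  "profile n q = q ^ (n - 1) / (1 + q) ^ n"

lemma continuous_on_profile: "S \<subseteq> {0..} \<Longrightarrow> continuous_on S (profile n)"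
  unfolding profile_def
  by (intro continuous_intros) (auto simp: add_nonneg_eq_0_iff)

lemma profile_has_derivative:
  assumes "n \<ge> 2" "q > 0"
  shows "(profile n has_real_derivative q ^ (n - 2) * (real n - 1 - q) / (1 + q) ^ (n + 1)) (at q)"
proof -
  obtain m where n: "n = Suc (Suc m)" using assms(1) by (metis add_2_eq_Suc le_Suc_ex)
  have q1: "1 + q > 0" using assms by simp
  have d1: "((\<lambda>q. q ^ Suc m) has_real_derivative real (Suc m) * q ^ m) (at q)"
    by (rule DERIV_cong[OF DERIV_pow]) simp
  have d2: "((\<lambda>q. (1 + q) ^ Suc (Suc m)) has_real_derivative real (Suc (Suc m)) * (1 + q) ^ Suc m) (at q)"
    by (rule DERIV_cong[OF DERIV_power[OF DERIV_add[OF DERIV_const DERIV_ident]]]) simp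
  have num: "real (Suc m) * q ^ m * (1 + q) ^ Suc (Suc m) - real (Suc (Suc m)) * (1 + q) ^ Suc m * q ^ Suc m
      = (1 + q) ^ Suc m * (q ^ m * (real m + 1 - q))"
    by (simp add: algebra_simps)
  have den: "((1 + q) ^ Suc (Suc m)) ^ Suc (Suc 0) = (1 + q) ^ Suc m * (1 + q) ^ (m + 3)"
    by (simp add: numeral_3_eq_3 algebra_simps)
  have nz: "(1 + q) ^ Suc (Suc m) \<noteq> 0" using q1 by simp
  have "((\<lambda>q. q ^ Suc m / (1 + q) ^ Suc (Suc m)) has_real_derivative
      (1 + q) ^ Suc m * (q ^ m * (real m + 1 - q)) / ((1 + q) ^ Suc m * (1 + q) ^ (m + 3))) (at q)"
    using DERIV_quotient[OF d1 d2 nz] unfolding num den .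
  moreover have "(1 + q) ^ Suc m * (q ^ m * (real m + 1 - q)) / ((1 + q) ^ Suc m * (1 + q) ^ (m + 3))
      = q ^ m * (real m + 1 - q) / (1 + q) ^ (m + 3)"
    using q1 by simp
  ultimately have "((\<lambda>q. q ^ Suc m / (1 + q) ^ Suc (Suc m)) has_real_derivative
      q ^ m * (real m + 1 - q) / (1 + q) ^ (m + 3)) (at q)"
    by (rule DERIV_cong)
  then show ?thesis
    unfolding profile_def n by (simp add: numeral_3_eq_3 add.commute)
qed

lemma profile_strict_increasing:
  assumes n: "n \<ge> 2" and "0 \<le> x" "x < y" "y \<le> real n - 1"
  shows "profile n x < profile n y"
proof (rule DERIV_pos_imp_increasing_open[OF \<open>x < y\<close>])
  fix z assume z: "x < z" "z < y"
  then show "\<exists>d. (profile n has_real_derivative d) (at z) \<and> d > 0"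
    using assms profile_has_derivative[OF n, of z] by force
qed (use assms in \<open>auto intro: continuous_on_profile\<close>)

lemma profile_strict_decreasing:
  assumes n: "n \<ge> 2" and "real n - 1 \<le> x" "x < y"
  shows "profile n y < profile n x"
proof (rule DERIV_neg_imp_decreasing_open[OF \<open>x < y\<close>])
  fix z assume z: "x < z" "z < y"
  then have "z > 0" "real n - 1 - z < 0" using assms by auto
  then show "\<exists>d. (profile n has_real_derivative d) (at z) \<and> d < 0"
    using profile_has_derivative[OF n, of z] by (auto intro!: divide_neg_pos mult_pos_neg)
qed (use assms in \<open>auto intro: continuous_on_profile\<close>)

lemma profile_le_max:
  assumes n: "n \<ge> 2" and "q \<ge> 0"
  shows "profile n q \<le> profile n (real n - 1)"
  using profile_strict_increasing[OF n, of q "real n - 1"] profile_strict_decreasing[OF n, of "real n - 1" q] assms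
  by (cases q "real n - 1" rule: linorder_cases) auto

lemma profile_le_inverse:
  assumes "n \<ge> 2" "q > 0"
  shows "profile n q \<le> 1 / q"
proof -
  have "profile n q = q ^ (n - 1) / ((1 + q) ^ (n - 1) * (1 + q))"
    unfolding profile_def using assms power_eq_mult_power_pred[of n "1 + q"] by (simp add: mult.commute)
  also have "\<dots> \<le> (1 + q) ^ (n - 1) / ((1 + q) ^ (n - 1) * (1 + q))"
    using assms by (intro divide_right_mono power_mono) auto
  also have "\<dots> \<le> 1 / q" using assms by (simp add: frac_le)
  finally show ?thesis .
qed

lemma profile_level_set_below_max:
  assumes n: "n \<ge> 2" and b: "0 < b" "b < profile n (real n - 1)"
  shows "\<exists>q1 q2. q1 < q2 \<and> {q. q > 0 \<and> profile n q = b} = {q1, q2}"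
proof -
  have n1: "real n - 1 > 0" using n by simp
  have profile0: "profile n 0 = 0" using n by (simp add: profile_def)
  obtain q1 where q1: "0 \<le> q1" "q1 \<le> real n - 1" "profile n q1 = b"
    using IVT'[of "profile n" 0 b "real n - 1", OF _ _ _ continuous_on_profile] b n1 profile0 by auto
  define M where "M = real n + 1 / b"
  have "1 / b > 0" using b by simp
  then have M: "M > real n - 1" "M > 0" using n1 unfolding M_def by linarith+
  have "profile n M \<le> 1 / M" using profile_le_inverse[OF n M(2)] .
  also have "1 / M < b"
    using b M(2) n1 unfolding M_def by (simp add: field_simps add_pos_pos)
  finally have "profile n M < b" .
  then obtain q2 where q2: "real n - 1 \<le> q2" "q2 \<le> M" "profile n q2 = b"
    using IVT2'[of "profile n" M b "real n - 1", OF _ _ _ continuous_on_profile] b M n1 by auto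
  have q1': "0 < q1" "q1 < real n - 1" and q2': "real n - 1 < q2"
    using q1 q2 b profile0 by (auto simp: less_le)
  have left: "q = q1" if "0 \<le> q" "q \<le> real n - 1" "profile n q = b" for q
    using profile_strict_increasing[OF n, of q q1] profile_strict_increasing[OF n, of q1 q] that q1
    by (cases q q1 rule: linorder_cases) auto
  have right: "q = q2" if "real n - 1 \<le> q" "profile n q = b" for q
    using profile_strict_decreasing[OF n, of q q2] profile_strict_decreasing[OF n, of q2 q] that q2
    by (cases q q2 rule: linorder_cases) auto
  have "q \<in> {q1, q2}" if "q > 0" "profile n q = b" for q
    using left[of q] right[of q] that by (cases "q \<le> real n - 1") auto
  then have "{q. q > 0 \<and> profile n q = b} = {q1, q2}" using q1 q1' q2 by auto
  moreover have "q1 < q2" using q1' q2' by simp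
  ultimately show ?thesis by blast
qed

lemma profile_level_set_max:
  assumes n: "n \<ge> 2"
  shows "{q. q > 0 \<and> profile n q = profile n (real n - 1)} = {real n - 1}"
  using n profile_strict_increasing[OF n, of _ "real n - 1"] profile_strict_decreasing[OF n, of "real n - 1"]
  by (auto, metis linorder_neqE_linordered_idom order_less_irrefl order_less_imp_le)

definition alpha :: "nat \<Rightarrow> real" where
  "alpha n = real n / (real n - 1)"

definition kappa :: "nat \<Rightarrow> real" where
  "kappa n = real n * alpha n"

lemma alpha_gt_1: "n \<ge> 2 \<Longrightarrow> alpha n > 1"
  by (simp add: alpha_def)

lemma alpha_mult: "n \<ge> 2 \<Longrightarrow> alpha n * (real n - 1) = real n"
  by (simp add: alpha_def)

lemma alpha_minus_one_mult: "n \<ge> 2 \<Longrightarrow> (alpha n - 1) * (real n - 1) = 1"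
  by (simp add: alpha_def field_simps)

lemma kappa_eq: "kappa n = real n * real n / (real n - 1)"
  by (simp add: kappa_def alpha_def)

lemma kappa_pos: "n \<ge> 2 \<Longrightarrow> kappa n > 0"
  by (simp add: kappa_eq)

lemma phi_of_neg:
  assumes "n \<ge> 2" "z < 0"
  shows "phi n z = - ((- z) ^ (n - 1))"
proof -
  have "n - 1 = Suc (n - 2)" using assms by simp
  then show ?thesis using assms unfolding phi_def by simp
qed

lemma neg_if_phi_neg: "phi n z < 0 \<Longrightarrow> z < 0"
  unfolding phi_def by (metis abs_ge_zero linorder_not_le mult_nonneg_nonneg zero_le_power)

definition explicit_sol :: "nat \<Rightarrow> real \<Rightarrow> real \<Rightarrow> real" where
  "explicit_sol n q r = real n * ln (1 + q) - real n * ln (1 + q * r powr alpha n)"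

definition explicit_sol_deriv :: "nat \<Rightarrow> real \<Rightarrow> real \<Rightarrow> real" where
  "explicit_sol_deriv n q r = - kappa n * q * r powr (alpha n - 1) / (1 + q * r powr alpha n)"

definition explicit_sol_restrict :: "nat \<Rightarrow> real \<Rightarrow> real \<Rightarrow> real" where
  "explicit_sol_restrict n q r = (if r \<in> {0..1} then explicit_sol n q r else 0)"

definition B_of :: "nat \<Rightarrow> real \<Rightarrow> real" where
  "B_of n q = real n * kappa n ^ (n - 1) * profile n q"

lemma one_plus_mult_powr_pos: "(q::real) \<ge> 0 \<Longrightarrow> 1 + q * r powr a > 0"
  by (simp add: add_pos_nonneg)

lemma continuous_on_powr_nonneg: "a > 0 \<Longrightarrow> continuous_on {0..} (\<lambda>r::real. r powr a)"
  by (rule continuous_on_powr'[OF continuous_on_id continuous_on_const]) auto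

lemma continuous_on_explicit_sol:
  assumes "n \<ge> 2" "q > 0"
  shows "continuous_on {0..} (explicit_sol n q)"
proof -
  have "\<forall>r\<in>{0..}. 1 + q * r powr alpha n \<noteq> 0"
    using one_plus_mult_powr_pos[of q] assms by (metis less_irrefl less_imp_le)
  then show ?thesis
    unfolding explicit_sol_def using alpha_gt_1[OF assms(1)]
    by (intro continuous_intros continuous_on_powr_nonneg) auto
qed

lemma continuous_on_explicit_sol_deriv:
  assumes "n \<ge> 2" "q > 0"
  shows "continuous_on {0..} (explicit_sol_deriv n q)"
proof -
  have "\<forall>r\<in>{0..}. 1 + q * r powr alpha n \<noteq> 0"
    using one_plus_mult_powr_pos[of q] assms by (metis less_irrefl less_imp_le)
  then show ?thesis
    unfolding explicit_sol_deriv_def using alpha_gt_1[OF assms(1)]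
    by (intro continuous_intros continuous_on_powr_nonneg) auto
qed

lemma explicit_sol_has_derivative:
  assumes n: "n \<ge> 2" and q: "q > 0" and r: "r > 0"
  shows "(explicit_sol n q has_real_derivative explicit_sol_deriv n q r) (at r)"
proof -
  have E: "1 + q * r powr alpha n > 0" using q by (simp add: one_plus_mult_powr_pos)
  have "((\<lambda>r. real n * ln (1 + q) - real n * ln (1 + q * r powr alpha n)) has_real_derivative
      - real n * (q * (alpha n * r powr (alpha n - 1))) / (1 + q * r powr alpha n)) (at r)"
    using E r by (auto intro!: derivative_eq_intros has_real_derivative_powr)
  then show ?thesis
    unfolding explicit_sol_def explicit_sol_deriv_def kappa_def by (simp add: field_simps)
qed

lemma explicit_sol_deriv_neg:
  assumes "n \<ge> 2" "q > 0" "r > 0"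
  shows "explicit_sol_deriv n q r < 0"
  unfolding explicit_sol_deriv_def using assms kappa_pos[OF assms(1)]
  by (simp add: divide_neg_pos one_plus_mult_powr_pos)

lemma phi_explicit_sol_deriv:
  assumes n: "n \<ge> 2" and q: "q > 0" and r: "r > 0"
  shows "phi n (explicit_sol_deriv n q r) = - ((kappa n * q) ^ (n - 1) * r / (1 + q * r powr alpha n) ^ (n - 1))"
proof -
  have "(r powr (alpha n - 1)) ^ (n - 1) = r powr ((alpha n - 1) * (real n - 1))"
    using r n by (simp add: powr_realpow[symmetric] powr_powr of_nat_diff)
  also have "\<dots> = r" using alpha_minus_one_mult[OF n] r by simp
  finally have "(- explicit_sol_deriv n q r) ^ (n - 1) = (kappa n * q) ^ (n - 1) * r / (1 + q * r powr alpha n) ^ (n - 1)"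
    unfolding explicit_sol_deriv_def by (simp add: power_divide power_mult_distrib)
  then show ?thesis using phi_of_neg[OF n explicit_sol_deriv_neg[OF n q r]] by simp
qed

lemma exp_explicit_sol:
  assumes "q > 0"
  shows "exp (explicit_sol n q r) = (1 + q) ^ n / (1 + q * r powr alpha n) ^ n"
  using assms one_plus_mult_powr_pos[of q r "alpha n"]
  by (simp add: explicit_sol_def exp_diff exp_of_nat_mult)

lemma DERIV_divide_power:
  fixes E :: "real \<Rightarrow> real"
  assumes "(E has_real_derivative E') (at r)" "E r \<noteq> 0"
  shows "((\<lambda>x. x / E x ^ Suc k) has_real_derivative (E r - real (Suc k) * r * E') / E r ^ Suc (Suc k)) (at r)"
proof -
  have "((\<lambda>x. x / E x ^ Suc k) has_real_derivative
      E r ^ k * (E r - real (Suc k) * r * E') / (E r ^ k * E r ^ Suc (Suc k))) (at r)"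
  proof (rule DERIV_cong[OF DERIV_quotient[OF DERIV_ident DERIV_power[OF assms(1)]]])
    show "E r ^ Suc k \<noteq> 0" using assms(2) by simp
    show "(1 * E r ^ Suc k - of_nat (Suc k) * (E' * E r ^ (Suc k - Suc 0)) * r) / (E r ^ Suc k) ^ Suc (Suc 0)
        = E r ^ k * (E r - real (Suc k) * r * E') / (E r ^ k * E r ^ Suc (Suc k))"
      by (simp add: algebra_simps power2_eq_square)
  qed
  then show ?thesis using assms(2) by simp
qed

lemma phi_explicit_sol_deriv_has_derivative:
  assumes n: "n \<ge> 2" and q: "q > 0" and r: "r > 0"
  shows "((\<lambda>s. phi n (explicit_sol_deriv n q s)) has_real_derivative
           - ((real n - 1) / r) * phi n (explicit_sol_deriv n q r) - B_of n q * exp (explicit_sol n q r)) (at r)"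
proof -
  obtain m where m: "n = Suc (Suc m)" using n by (metis add_2_eq_Suc le_Suc_ex)
  define K where "K = (kappa n * q) ^ (n - 1)"
  define E where "E x = 1 + q * x powr alpha n" for x
  have E: "E r > 0" unfolding E_def using q by (simp add: one_plus_mult_powr_pos)
  have dE: "(E has_real_derivative q * (alpha n * r powr (alpha n - 1))) (at r)"
    unfolding E_def[abs_def] using r by (auto intro!: derivative_eq_intros has_real_derivative_powr)
  have phi_eq: "phi n (explicit_sol_deriv n q x) = - K * (x / E x ^ Suc m)" if "x > 0" for x
    using phi_explicit_sol_deriv[OF n q that] m unfolding K_def E_def by simp
  have "real (Suc m) * r * (q * (alpha n * r powr (alpha n - 1)))
      = q * (alpha n * real (Suc m)) * (r * r powr (alpha n - 1))"
    by (simp add: algebra_simps)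
  also have "\<dots> = q * real n * r powr alpha n"
    using alpha_mult[OF n] m r by (simp add: powr_diff)
  finally have slope: "real (Suc m) * r * (q * (alpha n * r powr (alpha n - 1))) = real n * (E r - 1)"
    unfolding E_def by simp
  have "((\<lambda>x. - K * (x / E x ^ Suc m)) has_real_derivative
      - K * ((E r - real n * (E r - 1)) / E r ^ Suc (Suc m))) (at r)"
    using DERIV_cmult[OF DERIV_divide_power[OF dE, of m], of "- K"] E unfolding slope by simp
  moreover have "B_of n q * exp (explicit_sol n q r) = real n * K / E r ^ n"
    using q unfolding B_of_def profile_def exp_explicit_sol[OF q] K_def E_def
    by (simp add: field_simps power_mult_distrib)
  moreover have "- K * ((E r - real n * (E r - 1)) / E r ^ Suc (Suc m))
      = - ((real n - 1) / r) * (- K * (r / E r ^ Suc m)) - real n * K / E r ^ n"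
    using E r unfolding m by (simp add: field_simps)
  ultimately have "((\<lambda>x. - K * (x / E x ^ Suc m)) has_real_derivative
      - ((real n - 1) / r) * phi n (explicit_sol_deriv n q r) - B_of n q * exp (explicit_sol n q r)) (at r)"
    unfolding phi_eq[OF r] by simp
  then show ?thesis
    by (rule has_field_derivative_transform_within_open[where S="{0<..}"]) (use r phi_eq in auto)
qed

lemma explicit_sol_restrict_in_solution_set:
  assumes n: "n \<ge> 2" and q: "q > 0"
  shows "explicit_sol_restrict n q \<in> solution_set n (B_of n q)"
proof -
  have deriv: "(explicit_sol_restrict n q has_real_derivative explicit_sol_deriv n q r) (at r within {0..1})"
    if r: "r \<in> {0..1}" for r
  proof -
    have "(explicit_sol n q has_real_derivative explicit_sol_deriv n q r) (at r within {0..1})"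
      using continuous_on_explicit_sol[OF n q] continuous_on_explicit_sol_deriv[OF n q]
      by (intro has_real_derivative_within_Icc_of_interior explicit_sol_has_derivative[OF n q] r)
        (auto intro: continuous_on_subset)
    then show ?thesis
      by (rule has_field_derivative_transform_within[OF _ zero_less_one r])
        (simp add: explicit_sol_restrict_def)
  qed
  have flux: "((\<lambda>s. phi n (explicit_sol_deriv n q s)) has_real_derivative
      - ((real n - 1) / r) * phi n (explicit_sol_deriv n q r) - B_of n q * exp (explicit_sol_restrict n q r)) (at r)"
    if "r \<in> {0<..<1}" for r
    using phi_explicit_sol_deriv_has_derivative[OF n q, of r] that
    by (simp add: explicit_sol_restrict_def)
  have "continuous_on {0..1} (explicit_sol_deriv n q)"
    using continuous_on_explicit_sol_deriv[OF n q] by (rule continuous_on_subset) auto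
  moreover have "explicit_sol_deriv n q 0 = 0" "explicit_sol_restrict n q 1 = 0"
    by (simp_all add: explicit_sol_deriv_def explicit_sol_restrict_def explicit_sol_def)
  ultimately have "is_solution n (B_of n q) (explicit_sol_restrict n q)"
    unfolding is_solution_def using deriv flux by blast
  then show ?thesis
    unfolding solution_set_def by (simp add: explicit_sol_restrict_def)
qed

locale radial_solution =
  fixes n :: nat and B :: real and u u' :: "real \<Rightarrow> real"
  assumes n_ge_2: "n \<ge> 2" and B_pos: "B > 0"
    and u_has_deriv: "\<And>r. r \<in> {0..1} \<Longrightarrow> (u has_real_derivative u' r) (at r within {0..1})"
    and continuous_u': "continuous_on {0..1} u'"
    and phi_u'_has_deriv: "\<And>r. r \<in> {0<..<1} \<Longrightarrow> ((\<lambda>s. phi n (u' s)) has_real_derivative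
           - ((real n - 1) / r) * phi n (u' r) - B * exp (u r)) (at r)"
    and u'_0: "u' 0 = 0" and u_1: "u 1 = 0"
begin

lemma continuous_u: "continuous_on {0..1} u"
  unfolding continuous_on_eq_continuous_within using u_has_deriv DERIV_continuous by blast

lemma u_has_deriv_at: "r \<in> {0<..<1} \<Longrightarrow> (u has_real_derivative u' r) (at r)"
  using u_has_deriv[of r] at_within_Icc_at[of 0 r 1] by auto

definition flux :: "real \<Rightarrow> real" where
  "flux r = r ^ (n - 1) * phi n (u' r)"

lemma flux_0: "flux 0 = 0"
  using n_ge_2 by (simp add: flux_def)

lemma continuous_flux: "continuous_on {0..1} flux"
  unfolding flux_def phi_def by (intro continuous_intros continuous_u')

lemma flux_has_deriv:
  assumes r: "r \<in> {0<..<1}"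
  shows "(flux has_real_derivative - B * r ^ (n - 1) * exp (u r)) (at r)"
proof -
  obtain m where m: "n = Suc (Suc m)" using n_ge_2 by (metis add_2_eq_Suc le_Suc_ex)
  show ?thesis
    unfolding flux_def[abs_def]
    by (rule DERIV_cong[OF DERIV_mult[OF DERIV_pow phi_u'_has_deriv[OF r]]])
      (use r in \<open>simp add: m field_simps\<close>)
qed

lemma flux_neg:
  assumes r: "r \<in> {0<..1}"
  shows "flux r < 0"
proof -
  have "continuous_on {0..r} flux"
    using continuous_flux by (rule continuous_on_subset) (use r in auto)
  then obtain l z where z: "0 < z" "z < r" "(flux has_real_derivative l) (at z)" "flux r - flux 0 = (r - 0) * l"
    using MVT[of 0 r flux] r flux_has_deriv real_differentiable_def by fastforce
  have "l = - B * z ^ (n - 1) * exp (u z)"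
    using DERIV_unique[OF z(3) flux_has_deriv[of z]] z r by simp
  then have "l < 0" using B_pos z by simp
  then show ?thesis using z flux_0 by (simp add: mult_pos_neg)
qed

lemma u'_neg:
  assumes "r \<in> {0<..1}"
  shows "u' r < 0"
proof (rule neg_if_phi_neg)
  show "phi n (u' r) < 0"
    using flux_neg[OF assms] assms by (simp add: flux_def mult_less_0_iff)
qed

definition scaled_slope :: "real \<Rightarrow> real" where
  "scaled_slope r = - r * u' r"

lemma continuous_scaled_slope: "continuous_on {0..1} scaled_slope"
  unfolding scaled_slope_def by (intro continuous_intros continuous_u')

lemma scaled_slope_pos: "r \<in> {0<..1} \<Longrightarrow> scaled_slope r > 0"
  using u'_neg[of r] by (simp add: scaled_slope_def mult_pos_neg)

lemma scaled_slope_power: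
  assumes "r \<in> {0<..1}"
  shows "scaled_slope r ^ (n - 1) = - flux r"
proof -
  have "scaled_slope r = r * (- u' r)" by (simp add: scaled_slope_def)
  then have "scaled_slope r ^ (n - 1) = r ^ (n - 1) * (- u' r) ^ (n - 1)"
    by (simp only: power_mult_distrib)
  then show ?thesis using phi_of_neg[OF n_ge_2 u'_neg[OF assms]] by (simp add: flux_def)
qed

lemma scaled_slope_has_deriv:
  assumes r: "r \<in> {0<..<1}"
  shows "(scaled_slope has_real_derivative
           scaled_slope r * (B * r ^ (n - 1) * exp (u r)) / ((real n - 1) * - flux r)) (at r)"
proof -
  define a where "a = 1 / (real n - 1)"
  have root: "scaled_slope x = (- flux x) powr a" if "x \<in> {0<..1}" for x
  proof -
    have "- flux x = scaled_slope x powr (real (n - 1))"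
      using scaled_slope_power[OF that] scaled_slope_pos[OF that] by (simp add: powr_realpow)
    then have "(- flux x) powr a = (scaled_slope x powr (real n - 1)) powr a"
      using n_ge_2 by (simp add: of_nat_diff)
    also have "\<dots> = scaled_slope x"
      using scaled_slope_pos[OF that] n_ge_2 by (simp add: powr_powr a_def)
    finally show ?thesis by simp
  qed
  have r': "r \<in> {0<..1}" using r by simp
  have flux_pos: "- flux r > 0" using flux_neg[OF r'] by simp
  have "((\<lambda>x. (- flux x) powr a) has_real_derivative
      a * (- flux r) powr (a - 1) * (B * r ^ (n - 1) * exp (u r))) (at r)"
    by (rule DERIV_cong[OF DERIV_chain2[OF has_real_derivative_powr[OF flux_pos] DERIV_minus[OF flux_has_deriv[OF r]]]])
      simp
  moreover have "(- flux r) powr (a - 1) = scaled_slope r / (- flux r)"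
    unfolding powr_diff root[OF r'] powr_one[OF less_imp_le[OF flux_pos]] ..
  then have "a * (- flux r) powr (a - 1) = scaled_slope r / ((real n - 1) * - flux r)"
    unfolding a_def by simp
  ultimately have "((\<lambda>x. (- flux x) powr a) has_real_derivative
      scaled_slope r * (B * r ^ (n - 1) * exp (u r)) / ((real n - 1) * - flux r)) (at r)"
    by simp
  then show ?thesis
    by (rule has_field_derivative_transform_within_open[where S="{0<..<1}"]) (use r root in auto)
qed

definition first_integral :: "real \<Rightarrow> real" where
  "first_integral r = B * (r ^ n * exp (u r)) + flux r * (real n - (real n - 1) / real n * scaled_slope r)"

lemma continuous_first_integral: "continuous_on {0..1} first_integral"
proof -
  have "continuous_on {0..1} (\<lambda>x. x ^ n * exp (u x))"
    by (rule continuous_on_mult[OF continuous_on_power[OF continuous_on_id] continuous_on_exp[OF continuous_u]])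
  moreover have "continuous_on {0..1} (\<lambda>x. real n - (real n - 1) / real n * scaled_slope x)"
    by (rule continuous_on_diff[OF continuous_on_const continuous_on_mult[OF continuous_on_const continuous_scaled_slope]])
  ultimately show ?thesis
    unfolding first_integral_def[abs_def]
    by (rule continuous_on_add[OF continuous_on_mult[OF continuous_on_const] continuous_on_mult[OF continuous_flux]])
qed

lemma first_integral_has_deriv:
  assumes "0 < x" "x < 1"
  shows "(first_integral has_real_derivative 0) (at x)"
proof -
  define c where "c = (real n - 1) / real n"
  define X where "X = B * x ^ (n - 1) * exp (u x)"
  define s where "s = scaled_slope x"
  have x: "x \<in> {0<..<1}" using assms by simp
  have x0: "x > 0" "flux x \<noteq> 0" "real n - 1 > 0" using x flux_neg[of x] n_ge_2 by auto
  have u': "u' x = - s / x" using x0 by (simp add: s_def scaled_slope_def)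
  have "B * (real n * x ^ (n - Suc 0) * exp (u x) + exp (u x) * u' x * x ^ n) = X * (real n - s)"
    unfolding u' X_def using x0 power_eq_mult_power_pred[of n x] n_ge_2 by (simp add: field_simps)
  from DERIV_cmult[OF DERIV_mult[OF DERIV_pow[of n] DERIV_chain2[OF DERIV_exp u_has_deriv_at[OF x]]], of B] this
  have dA: "((\<lambda>x. B * (x ^ n * exp (u x))) has_real_derivative X * (real n - s)) (at x)"
    by (rule DERIV_cong)
  have "- B * x ^ (n - 1) * exp (u x) * (real n - c * scaled_slope x)
      + (0 - c * (scaled_slope x * (B * x ^ (n - 1) * exp (u x)) / ((real n - 1) * - flux x))) * flux x
      = - X * (real n - c * s) + c * s * X / (real n - 1)"
    unfolding X_def s_def using x0 by (simp add: field_simps)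
  from DERIV_mult[OF flux_has_deriv[OF x] DERIV_diff[OF DERIV_const DERIV_cmult[OF scaled_slope_has_deriv[OF x]]]] this
  have dP: "((\<lambda>x. flux x * (real n - c * scaled_slope x)) has_real_derivative
      - X * (real n - c * s) + c * s * X / (real n - 1)) (at x)"
    by (rule DERIV_cong)
  have "X * (real n - s) + (- X * (real n - c * s) + c * s * X / (real n - 1)) = 0"
    using x0 unfolding c_def by (simp add: field_simps)
  then show ?thesis
    unfolding first_integral_def[abs_def] c_def[symmetric] by (rule DERIV_cong[OF DERIV_add[OF dA dP]])
qed

lemma energy_identity:
  assumes r: "r \<in> {0..1}"
  shows "B * (r ^ n * exp (u r)) = - flux r * (real n - (real n - 1) / real n * scaled_slope r)"
proof -
  have "first_integral r = first_integral 0"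
    by (rule DERIV_isconst2[OF zero_less_one continuous_first_integral first_integral_has_deriv])
      (use r in auto)
  then show ?thesis using flux_0 n_ge_2 by (simp add: first_integral_def zero_power)
qed

lemma scaled_slope_less_kappa:
  assumes r: "r \<in> {0<..1}"
  shows "scaled_slope r < kappa n"
proof -
  have "0 < B * (r ^ n * exp (u r))" using B_pos r by simp
  also have "\<dots> = - flux r * (real n - (real n - 1) / real n * scaled_slope r)"
    using r by (intro energy_identity) simp
  finally have "0 < real n - (real n - 1) / real n * scaled_slope r"
    by (rule zero_less_mult_pos) (use flux_neg[OF r] in simp)
  then show ?thesis
    using n_ge_2 unfolding kappa_eq by (simp add: field_simps)
qed

lemma scaled_slope_logistic:
  assumes r: "r \<in> {0<..<1}"
  shows "(scaled_slope has_real_derivative scaled_slope r * (kappa n - scaled_slope r) / (real n * r)) (at r)"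
proof -
  have r0: "r > 0" "flux r \<noteq> 0" using r flux_neg[of r] by auto
  have energy: "r * (B * r ^ (n - 1) * exp (u r)) = - flux r * (real n - (real n - 1) / real n * scaled_slope r)"
    using energy_identity[of r] r power_eq_mult_power_pred[of n r] n_ge_2 by (simp add: mult_ac)
  have X: "B * r ^ (n - 1) * exp (u r) = - flux r * (real n - (real n - 1) / real n * scaled_slope r) / r"
    unfolding energy[symmetric] using r0 by simp
  have "scaled_slope r * (B * r ^ (n - 1) * exp (u r)) / ((real n - 1) * - flux r)
      = scaled_slope r * (kappa n - scaled_slope r) / (real n * r)"
    unfolding X kappa_eq using r0 n_ge_2 by (simp add: field_simps)
  then show ?thesis using scaled_slope_has_deriv[OF r] by simp
qed

definition sol_param :: real where
  "sol_param = scaled_slope 1 / (kappa n - scaled_slope 1)"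

lemma sol_param_pos: "sol_param > 0"
  using scaled_slope_pos[of 1] scaled_slope_less_kappa[of 1] by (simp add: sol_param_def)

text \<open>The quotient below is the first integral of the Bernoulli equation \<open>r s' = s (\<kappa> - s) / n\<close>.\<close>
lemma logistic_ratio_const:
  assumes r: "r \<in> {0<..1}"
  shows "scaled_slope r / ((kappa n - scaled_slope r) * r powr alpha n) = sol_param"
proof -
  define Q where "Q x = scaled_slope x / ((kappa n - scaled_slope x) * x powr alpha n)" for x
  have den: "(kappa n - scaled_slope x) * x powr alpha n \<noteq> 0" if "x \<in> {0<..1}" for x
    using scaled_slope_less_kappa[OF that] that by simp
  have "(Q has_real_derivative 0) (at x)" if x: "x \<in> {0<..<1}" for x
  proof -
    have x0: "x > 0" using x by simp
    define sp where "sp = scaled_slope x * (kappa n - scaled_slope x) / (real n * x)"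
    have D: "(Q has_real_derivative
        (sp * ((kappa n - scaled_slope x) * x powr alpha n)
         - ((0 - sp) * x powr alpha n + alpha n * x powr (alpha n - 1) * (kappa n - scaled_slope x)) * scaled_slope x)
        / ((kappa n - scaled_slope x) * x powr alpha n) ^ Suc (Suc 0)) (at x)"
      unfolding Q_def[abs_def] sp_def
      by (intro DERIV_quotient DERIV_mult DERIV_diff DERIV_const scaled_slope_logistic
          has_real_derivative_powr x x0 den) (use x in simp)
    have pw: "x powr (alpha n - 1) = x powr alpha n / x" using x0 by (simp add: powr_diff)
    have "sp * ((kappa n - scaled_slope x) * x powr alpha n)
         - ((0 - sp) * x powr alpha n + alpha n * x powr (alpha n - 1) * (kappa n - scaled_slope x)) * scaled_slope x = 0"
      unfolding pw sp_def kappa_def using x0 n_ge_2 by (simp add: field_simps)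
    with D show ?thesis by simp
  qed
  moreover have "continuous_on {r..1} Q"
    unfolding Q_def using r den alpha_gt_1[OF n_ge_2]
    by (intro continuous_intros continuous_on_subset[OF continuous_scaled_slope]
        continuous_on_subset[OF continuous_on_powr_nonneg]) auto
  ultimately have "Q r = Q 1"
    using DERIV_isconst2[of r 1 Q 1] r by (cases "r = 1") auto
  then show ?thesis by (simp add: Q_def sol_param_def)
qed

lemma scaled_slope_eq:
  assumes r: "r \<in> {0<..1}"
  shows "scaled_slope r = kappa n * sol_param * r powr alpha n / (1 + sol_param * r powr alpha n)"
proof -
  have "scaled_slope r = sol_param * ((kappa n - scaled_slope r) * r powr alpha n)"
    using logistic_ratio_const[OF r] scaled_slope_less_kappa[OF r] r by (simp add: field_simps)
  then show ?thesis
    using one_plus_mult_powr_pos[of sol_param r "alpha n"] sol_param_pos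
    by (simp add: field_simps)
qed

lemma u'_eq: "r \<in> {0..1} \<Longrightarrow> u' r = explicit_sol_deriv n sol_param r"
proof (cases "r = 0")
  case False
  assume r: "r \<in> {0..1}"
  then have r': "r \<in> {0<..1}" using False by simp
  then have "u' r = - scaled_slope r / r" by (simp add: scaled_slope_def)
  also have "\<dots> = explicit_sol_deriv n sol_param r"
    unfolding scaled_slope_eq[OF r'] explicit_sol_deriv_def using r' by (simp add: powr_diff)
  finally show ?thesis .
qed (simp add: u'_0 explicit_sol_deriv_def)

lemma u_eq:
  assumes r: "r \<in> {0..1}"
  shows "u r = explicit_sol n sol_param r"
proof -
  define g where "g x = u x - explicit_sol n sol_param x" for x
  have "continuous_on {0..1} g"
    unfolding g_def using continuous_on_explicit_sol[OF n_ge_2 sol_param_pos]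
    by (intro continuous_intros continuous_u) (auto intro: continuous_on_subset)
  moreover have "(g has_real_derivative 0) (at x)" if "x \<in> {0<..<1}" for x
    using DERIV_diff[OF u_has_deriv_at[OF that] explicit_sol_has_derivative[OF n_ge_2 sol_param_pos, of x]]
      u'_eq[of x] that unfolding g_def[abs_def] by simp
  ultimately have const: "g x = g 0" if "x \<in> {0..1}" for x
    using DERIV_isconst2[of 0 1 g x] that by auto
  have "g 1 = 0" using u_1 by (simp add: g_def explicit_sol_def)
  then have "g r = 0" using const[of r] const[of 1] r by simp
  then show ?thesis by (simp add: g_def)
qed

lemma B_eq: "B = B_of n sol_param"
proof -
  define q where "q = sol_param"
  have q: "q > 0" using sol_param_pos by (simp add: q_def)
  have s1: "scaled_slope 1 = kappa n * q / (1 + q)" using scaled_slope_eq[of 1] by (simp add: q_def)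
  have "(real n - 1) / real n * kappa n = real n" using n_ge_2 unfolding kappa_eq by (simp add: field_simps)
  then have "(real n - 1) / real n * scaled_slope 1 = real n * q / (1 + q)"
    unfolding s1 by (metis times_divide_eq_right mult.assoc)
  then have "real n - (real n - 1) / real n * scaled_slope 1 = real n / (1 + q)"
    using q by (simp add: field_simps)
  moreover have "- flux 1 = kappa n ^ (n - 1) * q ^ (n - 1) / (1 + q) ^ (n - 1)"
    using scaled_slope_power[of 1] unfolding s1 by (simp add: power_divide power_mult_distrib)
  ultimately have "B = kappa n ^ (n - 1) * q ^ (n - 1) / (1 + q) ^ (n - 1) * (real n / (1 + q))"
    using energy_identity[of 1] u_1 by simp
  also have "\<dots> = B_of n q"
    using n_ge_2 q power_eq_mult_power_pred[of n "1 + q"] unfolding B_of_def profile_def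
    by (simp add: field_simps)
  finally show ?thesis by (simp add: q_def)
qed

end

lemma solution_set_explicit:
  assumes n: "n \<ge> 2" and B: "B > 0" and u: "u \<in> solution_set n B"
  shows "\<exists>q > 0. B = B_of n q \<and> u = explicit_sol_restrict n q"
proof -
  obtain u' where "radial_solution n B u u'"
    using u n B unfolding solution_set_def is_solution_def radial_solution_def by blast
  then interpret radial_solution n B u u' .
  have "u = explicit_sol_restrict n sol_param"
    using u_eq u unfolding solution_set_def explicit_sol_restrict_def by auto
  then show ?thesis using sol_param_pos B_eq by blast
qed

lemma inj_on_explicit_sol_restrict:
  assumes "n \<ge> 2"
  shows "inj_on (explicit_sol_restrict n) {0<..}"
proof (rule inj_onI)
  fix q1 q2 :: real
  assume q: "q1 \<in> {0<..}" "q2 \<in> {0<..}" and eq: "explicit_sol_restrict n q1 = explicit_sol_restrict n q2"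
  have "real n * ln (1 + q1) = real n * ln (1 + q2)"
    using fun_cong[OF eq, of 0] assms by (simp add: explicit_sol_restrict_def explicit_sol_def)
  then show "q1 = q2" using q assms by simp
qed

lemma solution_set_eq_image:
  assumes "n \<ge> 2" "B > 0"
  shows "solution_set n B = explicit_sol_restrict n ` {q. q > 0 \<and> B_of n q = B}"
  using solution_set_explicit[OF assms] explicit_sol_restrict_in_solution_set[OF assms(1)] by blast

lemma B_of_eq_iff:
  assumes "n \<ge> 2"
  shows "B_of n q = B \<longleftrightarrow> profile n q = B / (real n * kappa n ^ (n - 1))"
  using kappa_pos[OF assms] assms by (auto simp: B_of_def field_simps)

lemma B_of_level_set_below_max:
  assumes n: "n \<ge> 2" and B: "0 < B" "B < B_of n (real n - 1)"
  shows "\<exists>q1 q2. q1 < q2 \<and> {q. q > 0 \<and> B_of n q = B} = {q1, q2}"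
proof -
  have "0 < B / (real n * kappa n ^ (n - 1))" "B / (real n * kappa n ^ (n - 1)) < profile n (real n - 1)"
    using B kappa_pos[OF n] n unfolding B_of_def by (simp_all add: field_simps)
  then show ?thesis
    unfolding B_of_eq_iff[OF n] by (rule profile_level_set_below_max[OF n])
qed

lemma B_of_level_set_max:
  assumes n: "n \<ge> 2"
  shows "{q. q > 0 \<and> B_of n q = B_of n (real n - 1)} = {real n - 1}"
  using profile_level_set_max[OF n] kappa_pos[OF n] n
  unfolding B_of_def by (simp add: field_simps)

lemma B_of_le_max:
  assumes "n \<ge> 2" "q \<ge> 0"
  shows "B_of n q \<le> B_of n (real n - 1)"
  using profile_le_max[OF assms] kappa_pos[OF assms(1)] unfolding B_of_def
  by (simp add: mult_left_mono)

lemma solution_set_below_max: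
  assumes n: "n \<ge> 2" and B: "0 < B" "B < B_of n (real n - 1)"
  shows "finite (solution_set n B) \<and> card (solution_set n B) = 2"
proof -
  obtain q1 q2 where q: "q1 < q2" "{q. q > 0 \<and> B_of n q = B} = {q1, q2}"
    using B_of_level_set_below_max[OF n B] by blast
  then have "q1 > 0" "q2 > 0" by blast+
  then have "explicit_sol_restrict n q1 \<noteq> explicit_sol_restrict n q2"
    using inj_on_explicit_sol_restrict[OF n] q(1) by (auto dest: inj_onD)
  then show ?thesis using solution_set_eq_image[OF n B(1)] q(2) by simp
qed

lemma B_of_max_pos: "n \<ge> 2 \<Longrightarrow> B_of n (real n - 1) > 0"
  using kappa_pos[of n] unfolding B_of_def profile_def by simp

lemma solution_set_at_max:
  assumes n: "n \<ge> 2"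
  shows "finite (solution_set n (B_of n (real n - 1))) \<and> card (solution_set n (B_of n (real n - 1))) = 1"
  using solution_set_eq_image[OF n B_of_max_pos[OF n]] B_of_level_set_max[OF n] by simp

lemma solution_set_above_max:
  assumes n: "n \<ge> 2" and B: "B > B_of n (real n - 1)"
  shows "solution_set n B = {}"
proof (rule equals0I)
  fix u assume "u \<in> solution_set n B"
  moreover have "B > 0" using B B_of_max_pos[OF n] by simp
  ultimately obtain q where "q > 0" "B = B_of n q"
    using solution_set_explicit[OF n] by blast
  then show False using B_of_le_max[OF n, of q] B by simp
qed

theorem proposition3p2:
  fixes n :: nat
  assumes "n > 1"
  shows "\<exists>Bn::real. Bn > 0
           \<and> (\<forall>B. 0 < B \<and> B < Bn \<longrightarrow> finite (solution_set n B) \<and> card (solution_set n B) = 2)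
           \<and> finite (solution_set n Bn) \<and> card (solution_set n Bn) = 1
           \<and> (\<forall>B. B > Bn \<longrightarrow> solution_set n B = {})"
proof -
  have n: "n \<ge> 2" using assms by simp
  show ?thesis
    using B_of_max_pos[OF n] solution_set_below_max[OF n] solution_set_at_max[OF n]
      solution_set_above_max[OF n] by blast
qed

end
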